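(* Let $F=\{\mathbb{R}^{n};f_{1},\dots,f_{m}\}$ be an IFS of contractive similitudes (consisting of at least two distinct maps), let $T\subset\mathbb{R}^{n}$ be closed, and let $c$ be a cost function as described in the context. Then for every $\mathbf{i}\in\Sigma^{\infty}$ and every $k\geq 0$, $\Pi_{T}(\mathbf{i}|k)$ and $\Pi_{T}(\mathbf{i})$ are well-defined collections of closed subsets of $\mathbb{R}^{n}$, and \[ \Pi_{T}(\mathbf{i}|0)\subset\Pi_{T}(\mathbf{i}|1)\subset\Pi_{T}(\mathbf{i}|2)\subset\cdots . \]
   Context: An IFS $F=\{\mathbb{R}^{n};f_{1},\dots,f_{m}\}$ is a finite collection of maps $f_{i}:\mathbb{R}^{n}\to\mathbb{R}^{n}$ with $|f_{i}(x)-f_{i}(y)|=\lambda_{i}|x-y|$, $\lambda_{i}\in(0,1)$. Let $\Sigma=\{1,\dots,m\}$, $\Sigma^{\infty}$ the set of infinite sequences $\mathbf{i}=i_{1}i_{2}\dots$ over $\Sigma$, and for $\mathbf{i}\in\Sigma^{\infty}$ write $\mathbf{i}|k=i_{1}\dots i_{k}$, $\mathbf{i}|0=\emptyset$. Write $f_{(\mathbf{j}|l)}=f_{j_{1}}\circ\cdots\circ f_{j_{l}}$ and $f_{-(\mathbf{i}|k)}=f_{i_{1}}^{-1}\circ\cdots\circ f_{i_{k}}^{-1}$ (identity for $k=0$). Assign costs $c_{i}>0$ to the maps $f_i$ and define $c(\mathbf{i}|k)=c_{i_{1}}+\cdots+c_{i_{k}}$, $c(\emptyset)=0$. Define \[ \Pi_{T}(\mathbf{i}|k)=f_{-(\mathbf{i}|k)}\big(\{f_{(\mathbf{j}|l)}(T):\mathbf{j}\in\Sigma^{\infty},\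 l\in\mathbb{N},\ c(\mathbf{j}|l-1)\leq c(\mathbf{i}|k)<c(\mathbf{j}|l)\}\big), \] with $\Pi_{T}(\emptyset)=\{f_{1}(T),\dots,f_{m}(T)\}$, and $\Pi_{T}(\mathbf{i})=\bigcup_{k\geq1}\Pi_{T}(\mathbf{i}|k)$. Here $\mathbb{N}=\{1,2,\dots\}$ and a map applied to a collection of sets is applied to each member. *)

theory Defs
  imports "HOL-Analysis.Analysis"
begin

text \<open>Alphabet Sigma = {1..m}. An infinite word i = i_1 i_2 ... is a function
  w :: nat => nat with i_{t+1} = w t (positions start at 0). The finite word i|k is
  represented by the pair (w, k).\<close>

definition seqs :: "nat \<Rightarrow> (nat \<Rightarrow> nat) set" where
  "seqs m = {w. \<forall>t. w t \<in> {1..m}}"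

definition word_cost :: "(nat \<Rightarrow> real) \<Rightarrow> (nat \<Rightarrow> nat) \<Rightarrow> nat \<Rightarrow> real" where
  "word_cost c w k = (\<Sum>t<k. c (w t))"

fun comp_word :: "(nat \<Rightarrow> 'a \<Rightarrow> 'a) \<Rightarrow> (nat \<Rightarrow> nat) \<Rightarrow> nat \<Rightarrow> 'a \<Rightarrow> 'a" where
  "comp_word f w 0 = id"
| "comp_word f w (Suc l) = comp_word f w l \<circ> f (w l)"

fun inv_comp_word :: "(nat \<Rightarrow> 'a \<Rightarrow> 'a) \<Rightarrow> (nat \<Rightarrow> nat) \<Rightarrow> nat \<Rightarrow> 'a \<Rightarrow> 'a" where
  "inv_comp_word f w 0 = id"
| "inv_comp_word f w (Suc k) = inv_comp_word f w k \<circ> inv (f (w k))"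

definition PiT :: "nat \<Rightarrow> (nat \<Rightarrow> 'a \<Rightarrow> 'a) \<Rightarrow> (nat \<Rightarrow> real) \<Rightarrow> 'a set
    \<Rightarrow> (nat \<Rightarrow> nat) \<Rightarrow> nat \<Rightarrow> 'a set set" where
  "PiT m f c T w k =
     (if k = 0 then (\<lambda>a. f a ` T) ` {1..m}
      else (\<lambda>S. inv_comp_word f w k ` S) `
        {comp_word f j l ` T | j l. j \<in> seqs m \<and> l \<ge> 1 \<and>
            word_cost c j (l - 1) \<le> word_cost c w k \<and> word_cost c w k < word_cost c j l})"

definition PiT_inf :: "nat \<Rightarrow> (nat \<Rightarrow> 'a \<Rightarrow> 'a) \<Rightarrow> (nat \<Rightarrow> real) \<Rightarrow> 'a set
    \<Rightarrow> (nat \<Rightarrow> nat) \<Rightarrow> 'a set set" where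
  "PiT_inf m f c T w = (\<Union>k\<in>{1..}. PiT m f c T w k)"

end

theory Submission
  imports Defs
begin

text \<open>A similitude of a Euclidean space is an injective linear map followed by a
  translation, hence a homeomorphism, so the maps f_{-(i|k)} o f_{(j|l)} preserve closedness.
  For the monotonicity, a piece f_{-(i|k)}(f_{(j|l)}(T)) of Pi_T(i|k) reappears in Pi_T(i|k+1) as
  f_{-(i|k+1)}(f_{(a j|l+1)}(T)) with a = i_{k+1}: prefixing j by a raises both c(j|l-1) and
  c(j|l) by c_a, exactly as c(i|k) grows, and f_a cancels against its inverse. The pieces f_a(T)
  of Pi_T(i|0) have this form with j = a a a ... and l = 1, which is where c_a > 0 is used.\<close>

definition similitude :: "('a::metric_space \<Rightarrow> 'a) \<Rightarrow> real \<Rightarrow> bool" where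
  "similitude h r \<longleftrightarrow> 0 < r \<and> (\<forall>x y. dist (h x) (h y) = r * dist x y)"

lemma similitude_id: "similitude id 1"
  by (simp add: similitude_def)

lemma similitude_comp: "similitude h r \<Longrightarrow> similitude g s \<Longrightarrow> similitude (h \<circ> g) (r * s)"
  by (simp add: similitude_def)

lemma similitude_inv:
  assumes "similitude h r" and "bij h"
  shows "similitude (inv h) (1 / r)"
  unfolding similitude_def
proof (intro conjI allI)
  show "0 < 1 / r"
    using assms(1) by (simp add: similitude_def)
  fix x y
  have "dist x y = dist (h (inv h x)) (h (inv h y))"
    using assms(2) by (simp add: bij_is_surj surj_f_inv_f)
  also have "\<dots> = r * dist (inv h x) (inv h y)"
    using assms(1) by (simp add: similitude_def)
  finally show "dist (inv h x) (inv h y) = 1 / r * dist x y"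
    using assms(1) by (simp add: similitude_def)
qed

lemma similitude_linear_part:
  fixes h :: "'a::euclidean_space \<Rightarrow> 'a"
  assumes "similitude h r"
  shows "linear (\<lambda>x. h x - h 0)" and "inj (\<lambda>x. h x - h 0)"
proof -
  have dist: "dist (h x - h 0) (h y - h 0) = r * dist x y" for x y
  proof -
    have "dist (h x - h 0) (h y - h 0) = dist (h x) (h y)"
      by (simp add: dist_norm)
    then show ?thesis
      using assms by (simp add: similitude_def)
  qed
  show "linear (\<lambda>x. h x - h 0)"
    by (rule scaling_linear[where c = r]) (simp_all add: dist)
  show "inj (\<lambda>x. h x - h 0)"
  proof (rule injI)
    fix x y
    assume "h x - h 0 = h y - h 0"
    then have "r * dist x y = 0"
      using dist[of x y] by simp
    with assms show "x = y"
      by (simp add: similitude_def)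
  qed
qed

lemma similitude_bij:
  fixes h :: "'a::euclidean_space \<Rightarrow> 'a"
  assumes "similitude h r"
  shows "bij h"
proof -
  let ?g = "\<lambda>x. h x - h 0"
  note g = similitude_linear_part[OF assms]
  have "bij ?g"
    unfolding bij_def using g linear_injective_imp_surjective[OF g] by blast
  then have "bij ((+) (h 0) \<circ> ?g)"
    using bij_plus by (rule bij_comp)
  then show ?thesis
    by (simp add: comp_def)
qed

lemma closed_similitude_image:
  fixes h :: "'a::euclidean_space \<Rightarrow> 'a"
  assumes "similitude h r" and "closed S"
  shows "closed (h ` S)"
proof -
  have "closed ((\<lambda>x. h x - h 0) ` S)"
    using similitude_linear_part[OF assms(1)] assms(2) closed_injective_linear_image
    by blast
  then have "closed ((+) (h 0) ` (\<lambda>x. h x - h 0) ` S)"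
    by (rule closed_translation)
  moreover have "(+) (h 0) ` (\<lambda>x. h x - h 0) ` S = h ` S"
    by (simp add: image_image)
  ultimately show ?thesis
    by simp
qed

lemma similitude_comp_word:
  assumes "\<forall>a\<in>{1..m}. \<exists>r. similitude (f a) r" and "j \<in> seqs m"
  shows "\<exists>r. similitude (comp_word f j l) r"
proof (induction l)
  case 0
  show ?case
    using similitude_id unfolding comp_word.simps by blast
next
  case (Suc l)
  then obtain r where "similitude (comp_word f j l) r"
    by blast
  moreover have "j l \<in> {1..m}"
    using assms(2) by (simp add: seqs_def)
  then obtain s where "similitude (f (j l)) s"
    using assms(1) by blast
  ultimately show ?case
    unfolding comp_word.simps by (blast intro: similitude_comp)
qed

lemma similitude_inv_comp_word:
  fixes f :: "nat \<Rightarrow> 'a::euclidean_space \<Rightarrow> 'a"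
  assumes "\<forall>a\<in>{1..m}. \<exists>r. similitude (f a) r" and "j \<in> seqs m"
  shows "\<exists>r. similitude (inv_comp_word f j l) r"
proof (induction l)
  case 0
  show ?case
    using similitude_id unfolding inv_comp_word.simps by blast
next
  case (Suc l)
  then obtain r where "similitude (inv_comp_word f j l) r"
    by blast
  moreover have "j l \<in> {1..m}"
    using assms(2) by (simp add: seqs_def)
  then obtain s where "similitude (f (j l)) s"
    using assms(1) by blast
  then have "similitude (inv (f (j l))) (1 / s)"
    using similitude_bij similitude_inv by blast
  ultimately show ?case
    unfolding inv_comp_word.simps by (blast intro: similitude_comp)
qed

lemma comp_word_case_nat: "comp_word f (case_nat a j) (Suc l) = f a \<circ> comp_word f j l"
proof (induction l)
  case 0
  show ?case
    by simp
next
  case (Suc l)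
  have "comp_word f (case_nat a j) (Suc (Suc l)) = comp_word f (case_nat a j) (Suc l) \<circ> f (j l)"
    by simp
  also have "\<dots> = f a \<circ> comp_word f j (Suc l)"
    unfolding Suc.IH by (simp add: comp_assoc)
  finally show ?case .
qed

lemma word_cost_case_nat: "word_cost c (case_nat a j) (Suc l) = c a + word_cost c j l"
  unfolding word_cost_def by (simp only: sum.lessThan_Suc_shift nat.case)

lemma inv_comp_word_Suc_cancel:
  assumes "inj (f (w k))"
  shows "inv_comp_word f w (Suc k) \<circ> (f (w k) \<circ> g) = inv_comp_word f w k \<circ> g"
  using assms by (simp add: comp_assoc flip: comp_assoc[of "inv (f (w k))"])

definition cost_crossing :: "(nat \<Rightarrow> real) \<Rightarrow> (nat \<Rightarrow> nat) \<Rightarrow> nat \<Rightarrow> real \<Rightarrow> bool" where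
  "cost_crossing c j l t \<longleftrightarrow> 1 \<le> l \<and> word_cost c j (l - 1) \<le> t \<and> t < word_cost c j l"

lemma cost_crossing_case_nat:
  "cost_crossing c j l t \<Longrightarrow> cost_crossing c (case_nat a j) (Suc l) (c a + t)"
  by (cases l) (simp_all add: cost_crossing_def word_cost_case_nat del: One_nat_def)

text \<open>The defining formula of Pi_T(i|k) for k >= 1, read literally also at k = 0.\<close>

definition cut_pieces :: "nat \<Rightarrow> (nat \<Rightarrow> 'a \<Rightarrow> 'a) \<Rightarrow> (nat \<Rightarrow> real) \<Rightarrow> 'a set
    \<Rightarrow> (nat \<Rightarrow> nat) \<Rightarrow> nat \<Rightarrow> 'a set set" where
  "cut_pieces m f c T w k =
     {inv_comp_word f w k ` comp_word f j l ` T | j l.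
        j \<in> seqs m \<and> cost_crossing c j l (word_cost c w k)}"

lemma PiT_eq_cut_pieces: "k \<noteq> 0 \<Longrightarrow> PiT m f c T w k = cut_pieces m f c T w k"
  by (auto simp: PiT_def cut_pieces_def cost_crossing_def)

lemma PiT_0_subset_cut_pieces:
  assumes "\<forall>a\<in>{1..m}. 0 < c a"
  shows "PiT m f c T w 0 \<subseteq> cut_pieces m f c T w 0"
proof
  fix S
  assume "S \<in> PiT m f c T w 0"
  then obtain a where a: "a \<in> {1..m}" and S: "S = f a ` T"
    by (auto simp: PiT_def)
  have "(\<lambda>_. a) \<in> seqs m" and "cost_crossing c (\<lambda>_. a) 1 (word_cost c w 0)"
    using a assms by (auto simp: seqs_def cost_crossing_def word_cost_def)
  moreover have "S = inv_comp_word f w 0 ` comp_word f (\<lambda>_. a) 1 ` T"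
    by (simp add: S)
  ultimately show "S \<in> cut_pieces m f c T w 0"
    unfolding cut_pieces_def by blast
qed

lemma PiT_subset_cut_pieces:
  "\<forall>a\<in>{1..m}. 0 < c a \<Longrightarrow> PiT m f c T w k \<subseteq> cut_pieces m f c T w k"
  using PiT_0_subset_cut_pieces[of m c f T w] PiT_eq_cut_pieces[of k m f c T w]
  by (cases "k = 0") simp_all

lemma cut_pieces_subset_Suc:
  assumes w: "w \<in> seqs m" and inj: "\<forall>a\<in>{1..m}. inj (f a)"
  shows "cut_pieces m f c T w k \<subseteq> cut_pieces m f c T w (Suc k)"
proof
  fix S
  assume "S \<in> cut_pieces m f c T w k"
  then obtain j l where j: "j \<in> seqs m" and crossing: "cost_crossing c j l (word_cost c w k)"
    and S: "S = inv_comp_word f w k ` comp_word f j l ` T"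
    unfolding cut_pieces_def by blast
  have wk: "w k \<in> {1..m}"
    using w by (simp add: seqs_def)
  let ?j = "case_nat (w k) j"
  have "?j \<in> seqs m"
    using j wk by (auto simp: seqs_def split: nat.split)
  moreover have "cost_crossing c ?j (Suc l) (word_cost c w (Suc k))"
    using cost_crossing_case_nat[OF crossing] by (simp add: word_cost_def add.commute)
  moreover have "S = inv_comp_word f w (Suc k) ` comp_word f ?j (Suc l) ` T"
  proof -
    have "inv_comp_word f w (Suc k) \<circ> comp_word f ?j (Suc l)
        = inv_comp_word f w k \<circ> comp_word f j l"
      unfolding comp_word_case_nat using inv_comp_word_Suc_cancel inj wk by blast
    then show ?thesis
      by (simp only: S image_comp)
  qed
  ultimately show "S \<in> cut_pieces m f c T w (Suc k)"
    unfolding cut_pieces_def by blast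
qed

lemma PiT_subset_PiT_Suc:
  assumes "w \<in> seqs m" and "\<forall>a\<in>{1..m}. inj (f a)" and "\<forall>a\<in>{1..m}. 0 < c a"
  shows "PiT m f c T w k \<subseteq> PiT m f c T w (Suc k)"
  using PiT_subset_cut_pieces[OF assms(3)] cut_pieces_subset_Suc[OF assms(1,2)]
    PiT_eq_cut_pieces[of "Suc k"]
  by blast

lemma closed_cut_pieces:
  fixes f :: "nat \<Rightarrow> 'a::euclidean_space \<Rightarrow> 'a"
  assumes "\<forall>a\<in>{1..m}. \<exists>r. similitude (f a) r" and "w \<in> seqs m" and "closed T"
    and "S \<in> cut_pieces m f c T w k"
  shows "closed S"
proof -
  obtain j l where j: "j \<in> seqs m" and S: "S = inv_comp_word f w k ` comp_word f j l ` T"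
    using assms(4) unfolding cut_pieces_def by blast
  obtain r where "similitude (comp_word f j l) r"
    using similitude_comp_word[OF assms(1) j] by blast
  moreover obtain s where "similitude (inv_comp_word f w k) s"
    using similitude_inv_comp_word[OF assms(1,2)] by blast
  ultimately show ?thesis
    unfolding S using closed_similitude_image assms(3) by blast
qed

theorem theorem2:
  fixes m :: nat and f :: "nat \<Rightarrow> 'a::euclidean_space \<Rightarrow> 'a"
    and lam :: "nat \<Rightarrow> real" and c :: "nat \<Rightarrow> real" and T :: "'a set"
  assumes sim: "\<And>a x y. a \<in> {1..m} \<Longrightarrow> dist (f a x) (f a y) = lam a * dist x y"
    and lam: "\<And>a. a \<in> {1..m} \<Longrightarrow> 0 < lam a \<and> lam a < 1"
    and distinct: "\<exists>a\<in>{1..m}. \<exists>b\<in>{1..m}. f a \<noteq> f b"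
    and cpos: "\<And>a. a \<in> {1..m} \<Longrightarrow> c a > 0"
    and T: "closed T"
  shows "(\<forall>a\<in>{1..m}. bij (f a))
    \<and> (\<forall>w\<in>seqs m. (\<forall>k. \<forall>S\<in>PiT m f c T w k. closed S)
        \<and> (\<forall>S\<in>PiT_inf m f c T w. closed S)
        \<and> (\<forall>k. PiT m f c T w k \<subseteq> PiT m f c T w (Suc k)))"
proof -
  have "similitude (f a) (lam a)" if "a \<in> {1..m}" for a
    using sim lam that by (simp add: similitude_def)
  then have similitudes: "\<forall>a\<in>{1..m}. \<exists>r. similitude (f a) r"
    by blast
  then have bij: "\<forall>a\<in>{1..m}. bij (f a)"
    using similitude_bij by blast
  have closed: "closed S" if "w \<in> seqs m" and "S \<in> PiT m f c T w k" for w k S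
    using closed_cut_pieces[OF similitudes \<open>w \<in> seqs m\<close> T]
      PiT_subset_cut_pieces[of m c f T w k] cpos that(2)
    by blast
  show ?thesis
    using bij closed PiT_subset_PiT_Suc[of _ m f c T] cpos
    by (auto simp: PiT_inf_def bij_is_inj)
qed

end
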